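(* Fix real numbers $\alpha>0$, $\gamma>0$, $\xi>0$, $\sigma>0$. For $(h,k,p,q)\in\mathbb{R}\times(0,2)\times\mathbb{R}\times\mathbb{R}$ define \[ \sigma_B^2=\frac{h^2}{1-(1-k)^2}\,\sigma^2,\qquad \sigma_F^2=\frac{1}{\alpha^2}\Big[(1-h-p)^2+\frac{h^2(k-q)^2}{1-(1-k)^2}\Big]\sigma^2,\qquad \sigma_W^2=\Big[p^2+\frac{h^2q^2}{1-(1-k)^2}\Big]\sigma^2, \] and $\mathcal{L}(h,k,p,q)=\sigma_W^2+\xi\,\sigma_B^2+\gamma\,\sigma_F^2$. Let \[ \beta=\frac{\gamma}{\xi(\gamma+\alpha^2)}. \] Then $\mathcal{L}$ attains its minimum over $\mathbb{R}\times(0,2)\times\mathbb{R}\times\mathbb{R}$ uniquely at \[ p=q=\xi\,\frac{\sqrt{4\beta+1}-1}{2},\qquad h=\frac{2\beta+1-\sqrt{4\beta+1}}{2\beta},\qquad k=\frac{\sqrt{4\beta+1}-1}{2\beta}. \]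
   Context: Interpretation (not needed for the claim): in a transitive network, after diagonalizing the graph Laplacian, each nonzero singular value $\alpha=\alpha(\theta)$ of the incidence operator gives a scalar mode with i.i.d. zero-mean noise $z(t)$ of variance $\sigma^2$ and linear control $b(t)=(1-k)b(t-1)+h z(t)$ (storage deviation), $f(t)=-\alpha^{-1}\{(1-h-p)z(t)+(k-q)b(t-1)\}$ (flow), $w(t)=p z(t)+q b(t-1)$ (fast generation); $\sigma_B^2,\sigma_F^2,\sigma_W^2$ are the stationary variances of $b,f,w$, and $\gamma,\xi$ are Lagrange weights penalizing flow and storage variance. *)

theory Defs
  imports Complex_Main
begin

definition sigmaB2 :: "real \<Rightarrow> real \<Rightarrow> real \<Rightarrow> real" where
  "sigmaB2 \<sigma> h k = h^2 / (1 - (1 - k)^2) * \<sigma>^2"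

definition sigmaF2 :: "real \<Rightarrow> real \<Rightarrow> real \<Rightarrow> real \<Rightarrow> real \<Rightarrow> real \<Rightarrow> real" where
  "sigmaF2 \<alpha> \<sigma> h k p q =
     (1 / \<alpha>^2) * ((1 - h - p)^2 + h^2 * (k - q)^2 / (1 - (1 - k)^2)) * \<sigma>^2"

definition sigmaW2 :: "real \<Rightarrow> real \<Rightarrow> real \<Rightarrow> real \<Rightarrow> real \<Rightarrow> real" where
  "sigmaW2 \<sigma> h k p q = (p^2 + h^2 * q^2 / (1 - (1 - k)^2)) * \<sigma>^2"

definition lagr :: "real \<Rightarrow> real \<Rightarrow> real \<Rightarrow> real \<Rightarrow> real \<Rightarrow> real \<Rightarrow> real \<Rightarrow> real \<Rightarrow> real" where
  "lagr \<alpha> \<gamma> \<xi> \<sigma> h k p q =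
     sigmaW2 \<sigma> h k p q + \<xi> * sigmaB2 \<sigma> h k + \<gamma> * sigmaF2 \<alpha> \<sigma> h k p q"

end

theory Submission imports Defs begin

(*
  Dividing out sigma^2, the cost is the "reduced cost"
    p^2 + c (1-h-p)^2 + h^2/D(k) * (q^2 + xi + c (k-q)^2),   D(k) = 1-(1-k)^2,
  with c = gamma/alpha^2 (lemma lagr_eq_reduced_cost).  Completing the square in p
  and in q (with e = c/(1+c)), and then in k and h, using that the optimal gain k0
  solves  e k0^2 = xi (1-k0)  (i.e. beta k0^2 = 1 - k0), writes the reduced cost as
  a sum of four nonnegative squares plus a constant (lemma reduced_cost_decomp).
  All four squares vanish exactly at h = 1-k0, k = k0, p = q = e k0, which gives the
  strict unique minimum (lemma reduced_cost_strict_min).  Finally the closed forms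
  of the theorem are identified: k0 = (sqrt(4 beta+1)-1)/(2 beta) is the root in
  (0,1) of beta k^2 + k - 1 (lemma optimal_gain), h0 = 1-k0 and p0 = xi beta k0.
*)

definition reduced_cost :: "real \<Rightarrow> real \<Rightarrow> real \<Rightarrow> real \<Rightarrow> real \<Rightarrow> real \<Rightarrow> real" where
  "reduced_cost c \<xi> h k p q =
     p^2 + c * (1 - h - p)^2 + h^2 / (1 - (1 - k)^2) * (q^2 + \<xi> + c * (k - q)^2)"

lemma lagr_eq_reduced_cost:
  assumes "\<alpha> \<noteq> 0"
  shows "lagr \<alpha> \<gamma> \<xi> \<sigma> h k p q = \<sigma>^2 * reduced_cost (\<gamma> / \<alpha>^2) \<xi> h k p q"
  using assms unfolding lagr_def sigmaW2_def sigmaB2_def sigmaF2_def reduced_cost_def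
  by (simp add: algebra_simps add_divide_distrib)

lemma complete_square:
  fixes c e x y :: real
  assumes "(1 + c) * e = c"
  shows "x^2 + c * (y - x)^2 = (1 + c) * (x - e * y)^2 + e * y^2"
proof -
  have "(1 + c) * (x - e * y)^2 + e * y^2 - (x^2 + c * (y - x)^2)
      = 2 * x * y * (c - (1 + c) * e) + (1 + e) * y^2 * ((1 + c) * e - c)"
    by (simp add: algebra_simps power2_eq_square)
  with assms show ?thesis by simp
qed

lemma storage_split:
  fixes e \<xi> k k0 :: real
  assumes D: "1 - (1 - k)^2 \<noteq> 0" and k0: "k0 \<noteq> 0"
    and rel: "e * k0^2 = \<xi> * (1 - k0)"
  shows "(\<xi> + e * k^2) / (1 - (1 - k)^2)
       = \<xi> / k0 + \<xi> * (k - k0)^2 / (k0^2 * (1 - (1 - k)^2))"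
proof -
  have "(\<xi> + e * k^2) * k0^2 = \<xi> * k0^2 + k^2 * (e * k0^2)"
    by (simp add: algebra_simps)
  also have "\<dots> = \<xi> * k0 * (1 - (1 - k)^2) + \<xi> * (k - k0)^2"
    unfolding rel by (simp add: algebra_simps power2_eq_square)
  finally have num: "(\<xi> + e * k^2) * k0^2 = \<xi> * k0 * (1 - (1 - k)^2) + \<xi> * (k - k0)^2" .
  have "\<xi> / k0 + \<xi> * (k - k0)^2 / (k0^2 * (1 - (1 - k)^2))
      = (\<xi> * k0 * (1 - (1 - k)^2) + \<xi> * (k - k0)^2) / (k0^2 * (1 - (1 - k)^2))"
    using D k0 by (simp add: field_simps power2_eq_square)
  also have "\<dots> = (\<xi> + e * k^2) / (1 - (1 - k)^2)"
    unfolding num[symmetric] using k0 by simp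
  finally show ?thesis by simp
qed

lemma h_split:
  fixes e \<xi> h k0 :: real
  assumes k0: "k0 \<noteq> 0" and rel: "e * k0^2 = \<xi> * (1 - k0)"
  shows "e * (1 - h)^2 + (\<xi> / k0) * h^2
       = (e + \<xi> / k0) * (h - (1 - k0))^2 + e * k0^2 + \<xi> * (1 - k0)^2 / k0"
proof -
  have "(e + \<xi> / k0) * (h - (1 - k0))^2 + e * k0^2 + \<xi> * (1 - k0)^2 / k0
          - (e * (1 - h)^2 + (\<xi> / k0) * h^2)
      = 2 * (h - 1 + k0) * (e * k0^2 - \<xi> * (1 - k0)) / k0"
    using k0 by (simp add: field_simps power2_eq_square)
  with rel show ?thesis by simp
qed

lemma reduced_cost_decomp:
  fixes c e \<xi> k0 h k p q :: real
  assumes ce: "(1 + c) * e = c" and k0: "k0 \<noteq> 0"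
    and rel: "e * k0^2 = \<xi> * (1 - k0)" and D: "1 - (1 - k)^2 \<noteq> 0"
  shows "reduced_cost c \<xi> h k p q
       = (1 + c) * (p - e * (1 - h))^2
       + h^2 / (1 - (1 - k)^2) * ((1 + c) * (q - e * k)^2)
       + h^2 * \<xi> * (k - k0)^2 / (k0^2 * (1 - (1 - k)^2))
       + (e + \<xi> / k0) * (h - (1 - k0))^2
       + (e * k0^2 + \<xi> * (1 - k0)^2 / k0)"
proof -
  define D where "D = 1 - (1 - k)^2"
  have "q^2 + \<xi> + c * (k - q)^2 = (1 + c) * (q - e * k)^2 + (\<xi> + e * k^2)"
    using complete_square[OF ce, of q k] by simp
  then have "reduced_cost c \<xi> h k p q
      = (1 + c) * (p - e * (1 - h))^2 + e * (1 - h)^2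
        + h^2 / D * ((1 + c) * (q - e * k)^2 + (\<xi> + e * k^2))"
    unfolding reduced_cost_def D_def complete_square[OF ce, of p "1 - h"] by simp
  also have "\<dots> = (1 + c) * (p - e * (1 - h))^2 + e * (1 - h)^2
        + h^2 / D * ((1 + c) * (q - e * k)^2) + h^2 * ((\<xi> + e * k^2) / D)"
    by (simp add: algebra_simps add_divide_distrib)
  also have "\<dots> = (1 + c) * (p - e * (1 - h))^2 + h^2 / D * ((1 + c) * (q - e * k)^2)
        + h^2 * \<xi> * (k - k0)^2 / (k0^2 * D) + (e * (1 - h)^2 + (\<xi> / k0) * h^2)"
    unfolding D_def storage_split[OF D k0 rel] by (simp add: algebra_simps)
  finally show ?thesis unfolding h_split[OF k0 rel] D_def by simp
qed

lemma reduced_cost_strict_min: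
  fixes c e \<xi> k0 h k p q :: real
  assumes c: "c > 0" and ce: "(1 + c) * e = c" and xi: "\<xi> > 0"
    and k0: "0 < k0" "k0 < 1" and rel: "e * k0^2 = \<xi> * (1 - k0)"
    and k: "0 < k" "k < 2" and ne: "(h, k, p, q) \<noteq> (1 - k0, k0, e * k0, e * k0)"
  shows "reduced_cost c \<xi> (1 - k0) k0 (e * k0) (e * k0) < reduced_cost c \<xi> h k p q"
proof -
  have D: "1 - (1 - k)^2 > 0" and D0: "1 - (1 - k0)^2 > 0"
    using k k0 by (simp_all add: power2_eq_square algebra_simps)
  have e: "e > 0"
    using c ce by (metis add_pos_pos mult_pos_pos zero_less_mult_pos zero_less_one)
  define A where "A = (1 + c) * (p - e * (1 - h))^2"
  define B where "B = h^2 / (1 - (1 - k)^2) * ((1 + c) * (q - e * k)^2)"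
  define C where "C = h^2 * \<xi> * (k - k0)^2 / (k0^2 * (1 - (1 - k)^2))"
  define E where "E = (e + \<xi> / k0) * (h - (1 - k0))^2"
  have nonneg: "A \<ge> 0" "B \<ge> 0" "C \<ge> 0" "E \<ge> 0"
    unfolding A_def B_def C_def E_def using c D xi e k0 by simp_all
  have "A + B + C + E > 0"
  proof (rule ccontr)
    assume "\<not> A + B + C + E > 0"
    then have "A = 0" "B = 0" "C = 0" "E = 0" using nonneg by linarith+
    moreover have "e + \<xi> / k0 > 0" using e xi k0 by (simp add: add_pos_pos)
    ultimately have hh: "h = 1 - k0" and kk: "k = k0"
      using xi k0 D unfolding E_def C_def by auto
    with \<open>A = 0\<close> \<open>B = 0\<close> have "p = e * k0" "q = e * k0"
      using c k0 D unfolding A_def B_def by auto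
    with hh kk ne show False by simp
  qed
  then show ?thesis
    using reduced_cost_decomp[OF ce _ rel] D D0 k0
    unfolding A_def B_def C_def E_def by simp
qed

lemma optimal_gain:
  fixes \<beta> :: real
  assumes "\<beta> > 0"
  defines "k0 \<equiv> (sqrt (4 * \<beta> + 1) - 1) / (2 * \<beta>)"
  shows "0 < k0" and "k0 < 1" and "\<beta> * k0^2 = 1 - k0"
proof -
  define S where "S = sqrt (4 * \<beta> + 1)"
  have S2: "S^2 = 4 * \<beta> + 1" and S1: "S > 1"
    unfolding S_def using assms(1) by simp_all
  have "S^2 < (2 * \<beta> + 1)^2"
    unfolding S2 using assms(1) by (simp add: power2_eq_square algebra_simps)
  then have "S < 2 * \<beta> + 1"
    by (rule power_less_imp_less_base) (use assms(1) in simp)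
  then show "0 < k0" and "k0 < 1"
    unfolding k0_def S_def[symmetric] using S1 assms(1) by (simp_all add: field_simps)
  show "\<beta> * k0^2 = 1 - k0"
    unfolding k0_def S_def[symmetric] using S2 assms(1)
    by (simp add: field_simps power2_eq_square)
qed

theorem mainTheorem1:
  fixes \<alpha> \<gamma> \<xi> \<sigma> :: real
  assumes "\<alpha> > 0" and "\<gamma> > 0" and "\<xi> > 0" and "\<sigma> > 0"
  defines "\<beta> \<equiv> \<gamma> / (\<xi> * (\<gamma> + \<alpha>^2))"
  defines "p0 \<equiv> \<xi> * (sqrt (4 * \<beta> + 1) - 1) / 2"
  defines "h0 \<equiv> (2 * \<beta> + 1 - sqrt (4 * \<beta> + 1)) / (2 * \<beta>)"
  defines "k0 \<equiv> (sqrt (4 * \<beta> + 1) - 1) / (2 * \<beta>)"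
  shows "k0 \<in> {0<..<2} \<and>
    (\<forall>h k p q. k \<in> {0<..<2} \<longrightarrow> (h, k, p, q) \<noteq> (h0, k0, p0, p0) \<longrightarrow>
        lagr \<alpha> \<gamma> \<xi> \<sigma> h0 k0 p0 p0 < lagr \<alpha> \<gamma> \<xi> \<sigma> h k p q)"
proof -
  define c where "c = \<gamma> / \<alpha>^2"
  define e where "e = \<xi> * \<beta>"
  have \<beta>: "\<beta> > 0" unfolding \<beta>_def using assms(1-3) by (simp add: add_pos_pos)
  have c: "c > 0" unfolding c_def using assms(1,2) by simp
  have a2: "\<alpha>^2 > 0" using assms(1) by simp
  have e: "e = \<gamma> / (\<gamma> + \<alpha>^2)" unfolding e_def \<beta>_def using assms(3) by simp
  have "1 + c = (\<gamma> + \<alpha>^2) / \<alpha>^2" unfolding c_def using a2 by (simp add: field_simps)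
  moreover have "\<gamma> + \<alpha>^2 \<noteq> 0" using a2 assms(2) by linarith
  ultimately have ce: "(1 + c) * e = c" unfolding e c_def by simp
  note gain = optimal_gain[OF \<beta>, folded k0_def]
  have rel: "e * k0^2 = \<xi> * (1 - k0)" unfolding e_def using gain(3) by simp
  have h0: "h0 = 1 - k0" unfolding h0_def k0_def using \<beta> by (simp add: field_simps)
  have p0: "p0 = e * k0" unfolding p0_def k0_def e_def using \<beta> by simp
  show ?thesis
  proof (intro conjI allI impI)
    show "k0 \<in> {0<..<2}" using gain by simp
    fix h k p q assume "k \<in> {0<..<2}" and "(h, k, p, q) \<noteq> (h0, k0, p0, p0)"
    then have "reduced_cost c \<xi> h0 k0 p0 p0 < reduced_cost c \<xi> h k p q"
      using reduced_cost_strict_min[OF c ce assms(3) gain(1,2) rel] h0 p0 by simp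
    then show "lagr \<alpha> \<gamma> \<xi> \<sigma> h0 k0 p0 p0 < lagr \<alpha> \<gamma> \<xi> \<sigma> h k p q"
      using assms(1,4) by (simp add: lagr_eq_reduced_cost c_def)
  qed
qed

end
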